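(* Fix $c\in\{1,\dots,K-1\}$ and suppose the density $\bar p_c$ satisfies the generation assumption $$\bar p_c(\bm x,\bar Y)=\binom{K-1}{c}^{-1}\sum_{y\notin \bar Y}p(\bm x,y)\qquad(\bm x\in\mathcal X,\ \bar Y\in\overline{\mathcal Y}_c).$$ Then for any loss function $\ell$ and any decision function $\bm g$ (for which the expectations below are finite), the classification risk satisfies $R(\bm g)=R_c(\bm g)$, where $$R_c(\bm g)=\mathbb E_{\bar p_c(\bm x,\bar Y)}\big[\bar\ell(\bm g(\bm x),\bar Y)\big],\qquad \bar\ell(\bm g(\bm x),\bar Y):=\sum_{y=1}^K\ell(\bm g(\bm x),y)-\frac{K-1}{|\bar Y|}\sum_{y\in\bar Y}\ell(\bm g(\bm x),y).$$
   Context: Let $K\ge 2$, $\mathcal X\subseteq\mathbb R^d$ the feature space and $\mathcal Y=\{1,\dots,K\}$ the label space. Let $p(\bm x,y)$ be a joint density on $\mathcal X\times\mathcal Y$ with marginal density $p(\bm x)$. For $c\in\{1,\dots,K-1\}$, $\overline{\mathcal Y}_c$ denotes the collection of all $c$-element subsets of $\{1,\dots,K\}$ ("complementary-label sets" of size $c$), and $\bar p_c(\bm x,\bar Y)$ is a density on $\mathcal X\times\overline{\mathcal Y}_c$. A decision function is a map $\bm g:\mathcal X\to\mathbb R^K$, a loss is a function $\ell:\mathbb R^K\times\mathcal Y\to[0,\infty)$, and the classification risk is $R(\bm g)=\mathbb E_{p(\bm x,y)}[\ell(\bm g(\bm x),y)]$. *)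

theory Defs
  imports "HOL-Analysis.Analysis"
begin

text \<open>Labels: the finite type 'k with CARD('k) = K plays the role of {1,...,K}. Features: a Euclidean space 'a (= R^d),
  with feature space X a (measurable) subset; densities are w.r.t. Lebesgue
  measure on X and counting measure on labels / label sets.\<close>

definition compl_label_sets :: "nat \<Rightarrow> 'k::finite set set" where
  "compl_label_sets c = {Yb. card Yb = c}"

definition risk ::
  "'a::euclidean_space set \<Rightarrow> ('a \<Rightarrow> 'k::finite \<Rightarrow> real) \<Rightarrow>
   (real^'k \<Rightarrow> 'k \<Rightarrow> real) \<Rightarrow> ('a \<Rightarrow> real^'k) \<Rightarrow> real" where
  "risk X p loss g = (LINT x:X|lborel. (\<Sum>y\<in>UNIV. p x y * loss (g x) y))"

definition compl_loss ::
  "(real^'k::finite \<Rightarrow> 'k \<Rightarrow> real) \<Rightarrow> real^'k \<Rightarrow> 'k set \<Rightarrow> real" where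
  "compl_loss loss v Yb =
     (\<Sum>y\<in>UNIV. loss v y) - (real CARD('k) - 1) / real (card Yb) * (\<Sum>y\<in>Yb. loss v y)"

definition compl_risk ::
  "nat \<Rightarrow> 'a::euclidean_space set \<Rightarrow> ('a \<Rightarrow> 'k::finite set \<Rightarrow> real) \<Rightarrow>
   (real^'k \<Rightarrow> 'k \<Rightarrow> real) \<Rightarrow> ('a \<Rightarrow> real^'k) \<Rightarrow> real" where
  "compl_risk c X pc loss g =
     (LINT x:X|lborel. (\<Sum>Yb\<in>compl_label_sets c. pc x Yb * compl_loss loss (g x) Yb))"

end

theory Submission
  imports Defs
begin

text \<open>The two integrands agree pointwise, by double counting over the c-element label sets Yb:
  a label lies outside C(K-1,c) of them, and an ordered pair y \<noteq> y' is separated (y outside,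
  y' inside) by C(K-2,c-1) of them. With L = \<Sum> \<ell>, P = \<Sum> p and Q = \<Sum> p \<ell>, the complementary
  risk density becomes L P - (K-1) C(K-2,c-1) / (c C(K-1,c)) (P L - Q), and the absorption
  identity (K-1) C(K-2,c-1) = c C(K-1,c) turns this into Q.\<close>

lemma card_compl_label_sets_avoiding:
  fixes y :: "'k::finite"
  shows "card {Yb \<in> compl_label_sets c. y \<notin> Yb} = (CARD('k) - 1) choose c"
proof -
  have "{Yb \<in> compl_label_sets c. y \<notin> Yb} = {B. B \<subseteq> UNIV - {y} \<and> card B = c}"
    unfolding compl_label_sets_def by blast
  then show ?thesis
    using n_subsets[of "UNIV - {y}" c] by (simp add: card_Diff_singleton)
qed

lemma card_compl_label_sets_separating:
  fixes y y' :: "'k::finite"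
  assumes "y \<noteq> y'" and "1 \<le> c"
  shows "card {Yb \<in> compl_label_sets c. y \<notin> Yb \<and> y' \<in> Yb} = (CARD('k) - 2) choose (c - 1)"
proof -
  let ?A = "{B. B \<subseteq> UNIV - {y} \<and> card B = c}"
  let ?B = "{B. B \<subseteq> UNIV - {y, y'} \<and> card B = c}"
  have split: "{Yb \<in> compl_label_sets c. y \<notin> Yb \<and> y' \<in> Yb} = ?A - ?B"
    unfolding compl_label_sets_def by blast
  have "card (UNIV - {y, y'}) = CARD('k) - 2"
    using assms(1) by (simp add: card_Diff_subset)
  then have card_B: "card ?B = (CARD('k) - 2) choose c"
    using n_subsets[of "UNIV - {y, y'}" c] by simp
  have card_A: "card ?A = (CARD('k) - 1) choose c"
    using n_subsets[of "UNIV - {y}" c] by (simp add: card_Diff_singleton)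
  have "2 \<le> CARD('k)"
    using card_mono[of UNIV "{y, y'}"] assms(1) by simp
  then have "CARD('k) - 1 = Suc (CARD('k) - 2)" by linarith
  moreover obtain k where "c = Suc k" using assms(2) by (cases c) auto
  ultimately have "card ?A - card ?B = (CARD('k) - 2) choose (c - 1)"
    unfolding card_A card_B by simp
  moreover have "card (?A - ?B) = card ?A - card ?B"
    by (intro card_Diff_subset) auto
  ultimately show ?thesis by (simp add: split)
qed

lemma sum_compl_label_sets_outside:
  fixes a :: "'k::finite \<Rightarrow> 'b::comm_semiring_1"
  shows "(\<Sum>Yb\<in>compl_label_sets c. \<Sum>y\<in>UNIV - Yb. a y)
       = of_nat ((CARD('k) - 1) choose c) * (\<Sum>y\<in>UNIV. a y)"
proof -
  have "(\<Sum>Yb\<in>compl_label_sets c. \<Sum>y\<in>UNIV - Yb. a y)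
      = (\<Sum>Yb\<in>compl_label_sets c. \<Sum>y\<in>{y \<in> UNIV. y \<notin> Yb}. a y)"
    by (intro sum.cong) auto
  also have "\<dots> = (\<Sum>y\<in>UNIV. \<Sum>Yb\<in>{Yb \<in> compl_label_sets c. y \<notin> Yb}. a y)"
    by (rule sum.swap_restrict) auto
  also have "\<dots> = (\<Sum>y\<in>UNIV. of_nat ((CARD('k) - 1) choose c) * a y)"
    by (simp add: card_compl_label_sets_avoiding)
  finally show ?thesis by (simp add: sum_distrib_left)
qed

lemma sum_compl_label_sets_cross:
  fixes a l :: "'k::finite \<Rightarrow> 'b::comm_ring_1"
  assumes "1 \<le> c"
  shows "(\<Sum>Yb\<in>compl_label_sets c. (\<Sum>y\<in>UNIV - Yb. a y) * (\<Sum>y\<in>Yb. l y))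
       = of_nat ((CARD('k) - 2) choose (c - 1))
         * ((\<Sum>y\<in>UNIV. a y) * (\<Sum>y\<in>UNIV. l y) - (\<Sum>y\<in>UNIV. a y * l y))"
proof -
  define M :: 'b where "M = of_nat ((CARD('k) - 2) choose (c - 1))"
  have inner: "(\<Sum>y'\<in>UNIV. \<Sum>Yb\<in>{Yb \<in> compl_label_sets c. y \<notin> Yb \<and> y' \<in> Yb}. a y * l y')
      = M * (a y * (\<Sum>y'\<in>UNIV. l y') - a y * l y)" for y
  proof -
    have "(\<Sum>y'\<in>UNIV. \<Sum>Yb\<in>{Yb \<in> compl_label_sets c. y \<notin> Yb \<and> y' \<in> Yb}. a y * l y')
        = (\<Sum>y'\<in>UNIV - {y}. M * (a y * l y'))"
      by (rule sum.mono_neutral_cong_right)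
        (auto simp: M_def card_compl_label_sets_separating[OF not_sym assms])
    then show ?thesis
      by (simp add: sum_diff1 sum_distrib_left right_diff_distrib)
  qed
  have "(\<Sum>Yb\<in>compl_label_sets c. (\<Sum>y\<in>UNIV - Yb. a y) * (\<Sum>y\<in>Yb. l y))
      = (\<Sum>Yb\<in>compl_label_sets c. \<Sum>y\<in>{y \<in> UNIV. y \<notin> Yb}. \<Sum>y'\<in>{y' \<in> UNIV. y' \<in> Yb}. a y * l y')"
    by (intro sum.cong refl) (simp add: sum_product set_diff_eq)
  also have "\<dots> = (\<Sum>y\<in>UNIV. \<Sum>Yb\<in>{Yb \<in> compl_label_sets c. y \<notin> Yb}.
                     \<Sum>y'\<in>{y' \<in> UNIV. y' \<in> Yb}. a y * l y')"
    by (rule sum.swap_restrict) auto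
  also have "\<dots> = (\<Sum>y\<in>UNIV. \<Sum>y'\<in>UNIV.
                     \<Sum>Yb\<in>{Yb \<in> compl_label_sets c. y \<notin> Yb \<and> y' \<in> Yb}. a y * l y')"
    by (intro sum.cong refl, subst sum.swap_restrict) (auto intro!: sum.cong)
  also have "\<dots> = M * (\<Sum>y\<in>UNIV. a y * (\<Sum>y'\<in>UNIV. l y') - a y * l y)"
    unfolding inner by (rule sum_distrib_left[symmetric])
  also have "\<dots> = M * ((\<Sum>y\<in>UNIV. a y) * (\<Sum>y\<in>UNIV. l y) - (\<Sum>y\<in>UNIV. a y * l y))"
    by (simp only: sum_subtractf sum_distrib_right)
  finally show ?thesis unfolding M_def .
qed

lemma sum_compl_label_sets_compl_loss:
  fixes a :: "'k::finite \<Rightarrow> real"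
  assumes "1 \<le> c" and "c \<le> CARD('k) - 1"
  shows "(\<Sum>Yb\<in>compl_label_sets c.
            (\<Sum>y\<in>UNIV - Yb. a y) / real ((CARD('k) - 1) choose c) * compl_loss loss v Yb)
       = (\<Sum>y\<in>UNIV. a y * loss v y)"
proof -
  define N where "N = real ((CARD('k) - 1) choose c)"
  define M where "M = real ((CARD('k) - 2) choose (c - 1))"
  define L where "L = (\<Sum>y\<in>UNIV. loss v y)"
  define P where "P = (\<Sum>y\<in>UNIV. a y)"
  define Q where "Q = (\<Sum>y\<in>UNIV. a y * loss v y)"
  have "N > 0" unfolding N_def using assms(2) by simp
  have "c * ((CARD('k) - 1) choose c) = (CARD('k) - 1) * ((CARD('k) - 2) choose (c - 1))"
    using times_binomial_minus1_eq[of c "CARD('k) - 1"] assms(1) by (simp add: numeral_2_eq_2)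
  then have "real c * N = real (CARD('k) - 1) * M"
    unfolding N_def M_def by (metis of_nat_mult)
  then have binomial: "(real CARD('k) - 1) * M = real c * N"
    by (simp add: of_nat_diff Suc_leI)
  have "(\<Sum>Yb\<in>compl_label_sets c. (\<Sum>y\<in>UNIV - Yb. a y) / N * compl_loss loss v Yb)
      = (\<Sum>Yb\<in>compl_label_sets c. L / N * (\<Sum>y\<in>UNIV - Yb. a y)
           - (real CARD('k) - 1) / (real c * N) * ((\<Sum>y\<in>UNIV - Yb. a y) * (\<Sum>y\<in>Yb. loss v y)))"
    by (intro sum.cong refl)
      (simp add: compl_loss_def compl_label_sets_def L_def divide_inverse algebra_simps)
  also have "\<dots> = L / N * (N * P) - (real CARD('k) - 1) / (real c * N) * (M * (P * L - Q))"
    unfolding sum_subtractf sum_distrib_left[symmetric] sum_compl_label_sets_outside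
      sum_compl_label_sets_cross[OF assms(1)]
    by (simp add: N_def M_def L_def P_def Q_def)
  also have "\<dots> = L * P - (real CARD('k) - 1) * M / (real c * N) * (P * L - Q)"
    using \<open>N > 0\<close> by simp
  also have "\<dots> = Q"
    using \<open>N > 0\<close> assms(1) by (simp add: binomial)
  finally show ?thesis unfolding N_def Q_def .
qed

theorem lemma1:
  fixes X :: "'a::euclidean_space set"
    and p :: "'a \<Rightarrow> 'k::finite \<Rightarrow> real"
    and pc :: "'a \<Rightarrow> 'k set \<Rightarrow> real"
    and loss :: "real^'k \<Rightarrow> 'k \<Rightarrow> real"
    and g :: "'a \<Rightarrow> real^'k"
    and c :: nat
  assumes K2: "CARD('k) \<ge> 2"
    and c_range: "1 \<le> c" "c \<le> CARD('k) - 1"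
    and X_meas: "X \<in> sets lborel"
    and p_nonneg: "\<And>x y. x \<in> X \<Longrightarrow> p x y \<ge> 0"
    and p_int: "set_integrable lborel X (\<lambda>x. \<Sum>y\<in>UNIV. p x y)"
    and p_total: "(LINT x:X|lborel. (\<Sum>y\<in>UNIV. p x y)) = 1"
    and pc_nonneg: "\<And>x Yb. x \<in> X \<Longrightarrow> Yb \<in> compl_label_sets c \<Longrightarrow> pc x Yb \<ge> 0"
    and pc_int: "set_integrable lborel X (\<lambda>x. \<Sum>Yb\<in>compl_label_sets c. pc x Yb)"
    and pc_total: "(LINT x:X|lborel. (\<Sum>Yb\<in>compl_label_sets c. pc x Yb)) = 1"
    and generation: "\<And>x Yb. x \<in> X \<Longrightarrow> Yb \<in> compl_label_sets c \<Longrightarrow>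
          pc x Yb = (\<Sum>y\<in>UNIV - Yb. p x y) / real ((CARD('k) - 1) choose c)"
    and loss_nonneg: "\<And>v y. loss v y \<ge> 0"
    and R_finite: "set_integrable lborel X (\<lambda>x. \<Sum>y\<in>UNIV. p x y * loss (g x) y)"
    and Rc_finite: "set_integrable lborel X
          (\<lambda>x. \<Sum>Yb\<in>compl_label_sets c. pc x Yb * compl_loss loss (g x) Yb)"
  shows "risk X p loss g = compl_risk c X pc loss g"
  \<comment> \<open>Only the generation assumption matters: the two integrands already agree pointwise on X.\<close>
  unfolding risk_def compl_risk_def
proof (rule set_lebesgue_integral_cong[OF X_meas], intro allI impI)
  fix x assume "x \<in> X"
  have "(\<Sum>Yb\<in>compl_label_sets c. pc x Yb * compl_loss loss (g x) Yb)
      = (\<Sum>Yb\<in>compl_label_sets c.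
           (\<Sum>y\<in>UNIV - Yb. p x y) / real ((CARD('k) - 1) choose c) * compl_loss loss (g x) Yb)"
    using generation[OF \<open>x \<in> X\<close>] by simp
  also have "\<dots> = (\<Sum>y\<in>UNIV. p x y * loss (g x) y)"
    using sum_compl_label_sets_compl_loss[OF c_range] .
  finally show "(\<Sum>y\<in>UNIV. p x y * loss (g x) y)
      = (\<Sum>Yb\<in>compl_label_sets c. pc x Yb * compl_loss loss (g x) Yb)" ..
qed

end
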